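(* Let $n\ge1$, $\eta>0$, $C\in\mathbb{R}_+^{n\times n}$, $q'\in\Delta_n$ and $p'\in\Delta_n$ with all entries positive. For $i=1,\dots,n$ define $\phi_i:\mathbb{R}^n\to\mathbb{R}$ by $$\phi_i(\lambda)=np_i'\Big[-\langle q',\lambda\rangle-\eta\log p_i'+\eta\log\Big(\sum_{j=1}^n\exp((\lambda_j-C_{i,j}-\eta)/\eta)\Big)+\eta\Big].$$ Then $\phi_i$ is $\frac{np_i'}{\eta}$-smooth w.r.t. $\|\cdot\|_2$ and $\frac{5np_i'}{\eta}$-smooth w.r.t. $\|\cdot\|_\infty$.
   Context: $\Delta_n=\{a\in\mathbb{R}_+^n: a^T\mathbf 1=1\}$. A convex differentiable function $g$ is $\beta$-smooth w.r.t. a norm $\|\cdot\|_H$ if $\|\nabla g(x)-\nabla g(y)\|_{H,*}\le\beta\|x-y\|_H$ for all $x,y$, where $\|u\|_{H,*}=\max\{\langle u,v\rangle:\|v\|_H\le1\}$ (so the dual norm of $\|\cdot\|_\infty$ is $\|\cdot\|_1$). *)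

theory Defs
  imports "HOL-Analysis.Analysis"
begin

definition dual_norm :: "('a::real_inner \<Rightarrow> real) \<Rightarrow> 'a \<Rightarrow> real" where
  "dual_norm N u = Sup {u \<bullet> v | v. N v \<le> 1}"

definition beta_smooth_wrt ::
  "('a::euclidean_space \<Rightarrow> real) \<Rightarrow> real \<Rightarrow> ('a \<Rightarrow> real) \<Rightarrow> bool" where
  "beta_smooth_wrt N \<beta> g \<longleftrightarrow>
     convex_on UNIV g \<and>
     (\<exists>G. (\<forall>x. (g has_derivative (\<lambda>h. G x \<bullet> h)) (at x)) \<and>
          (\<forall>x y. dual_norm N (G x - G y) \<le> \<beta> * N (x - y)))"

definition prob_simplex :: "(real^'n) set" where
  "prob_simplex = {a. (\<forall>i. a $ i \<ge> 0) \<and> (\<Sum>i\<in>UNIV. a $ i) = 1}"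

text \<open>The function phi_i; n = CARD('n).\<close>
definition phi :: "real \<Rightarrow> real^'n^'n \<Rightarrow> real^'n \<Rightarrow> real^'n \<Rightarrow> 'n \<Rightarrow> real^'n \<Rightarrow> real" where
  "phi \<eta> C q p i l =
     real CARD('n) * p $ i *
       (- (q \<bullet> l) - \<eta> * ln (p $ i)
        + \<eta> * ln (\<Sum>j\<in>UNIV. exp ((l $ j - C $ i $ j - \<eta>) / \<eta>)) + \<eta>)"

end

theory Submission
  imports Defs
begin

(* phi_i is, up to the factor n p'_i > 0 and an affine term, the function
   l |-> eta * lse ((l - c) / eta), where lse x = ln (sum_j exp x_j) has the softmax as
   gradient. By the mean value theorem along the segment from x to y,
   <softmax y - softmax x, w> is the covariance of w and y - x under some probability
   vector s. After centring, Cauchy-Schwarz bounds such a covariance by |w|_2 |y - x|_2,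
   and the triangle inequality by 2 |w|_inf |y - x|_inf; so the constant 5 in the
   infinity-norm bound can even be improved to 2. *)

definition lse :: "real^'n \<Rightarrow> real" where
  "lse x = ln (\<Sum>j\<in>UNIV. exp (x $ j))"

definition softmax :: "real^'n \<Rightarrow> real^'n" where
  "softmax x = (\<chi> j. exp (x $ j) / (\<Sum>k\<in>UNIV. exp (x $ k)))"

definition weighted_cov :: "real^'n \<Rightarrow> real^'n \<Rightarrow> real^'n \<Rightarrow> real" where
  "weighted_cov s u v = (\<Sum>j\<in>UNIV. s $ j * u $ j * v $ j) - (s \<bullet> u) * (s \<bullet> v)"

lemma sum_exp_pos:
  fixes f :: "'n::finite \<Rightarrow> real"
  shows "0 < (\<Sum>j\<in>UNIV. exp (f j))"
  by (intro sum_pos) auto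

lemma softmax_in_prob_simplex: "softmax x \<in> prob_simplex"
  using sum_exp_pos[of "\<lambda>j. x $ j"]
  by (simp add: prob_simplex_def softmax_def sum_divide_distrib[symmetric])

lemma lse_has_derivative: "(lse has_derivative (\<lambda>h. softmax x \<bullet> h)) (at x)"
proof -
  have "(lse has_derivative
      (\<lambda>h. (\<Sum>j\<in>UNIV. exp (x $ j) * h $ j) / (\<Sum>j\<in>UNIV. exp (x $ j)))) (at x)"
    unfolding lse_def
    by (auto intro!: derivative_eq_intros sum_exp_pos
        bounded_linear_imp_has_derivative[OF bounded_linear_vec_nth]
        simp: divide_inverse mult.commute)
  then show ?thesis
    by (simp add: softmax_def inner_vec_def sum_divide_distrib mult.commute)
qed

lemma sum_exp_diff_lse: "(\<Sum>j\<in>UNIV. exp (x $ j - lse x)) = 1"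
  using sum_exp_pos[of "\<lambda>j. x $ j"]
  by (simp add: lse_def exp_diff sum_divide_distrib[symmetric])

lemma convex_on_lse: "convex_on UNIV lse"
proof (rule convex_onI)
  fix t :: real and x y :: "real^'n"
  assume t: "0 < t" "t < 1"
  define z where "z = (1 - t) *\<^sub>R x + t *\<^sub>R y"
  define m where "m = (1 - t) * lse x + t * lse y"
  have "exp (z $ j - m) \<le> (1 - t) * exp (x $ j - lse x) + t * exp (y $ j - lse y)" for j
  proof -
    have "z $ j - m = (1 - t) * (x $ j - lse x) + t * (y $ j - lse y)"
      by (simp add: z_def m_def algebra_simps)
    also have "exp \<dots> \<le> (1 - t) * exp (x $ j - lse x) + t * exp (y $ j - lse y)"
      using convex_onD[OF exp_convex, of t "x $ j - lse x" "y $ j - lse y"] t by simp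
    finally show ?thesis .
  qed
  then have "(\<Sum>j\<in>UNIV. exp (z $ j - m))
      \<le> (\<Sum>j\<in>UNIV. (1 - t) * exp (x $ j - lse x) + t * exp (y $ j - lse y))"
    by (rule sum_mono)
  also have "\<dots> = (1 - t) * (\<Sum>j\<in>UNIV. exp (x $ j - lse x)) + t * (\<Sum>j\<in>UNIV. exp (y $ j - lse y))"
    by (simp add: sum.distrib sum_distrib_left)
  also have "\<dots> = 1"
    by (simp add: sum_exp_diff_lse)
  finally have "(\<Sum>j\<in>UNIV. exp (z $ j)) \<le> exp m"
    by (simp add: exp_diff flip: sum_divide_distrib)
  then show "lse z \<le> m"
    unfolding lse_def using sum_exp_pos[of "\<lambda>j. z $ j"] ln_le_cancel_iff[of _ "exp m"] by simp
qed (rule convex_UNIV)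

lemma softmax_inner_has_real_derivative:
  "((\<lambda>t. softmax (x + t *\<^sub>R d) \<bullet> w) has_real_derivative
     weighted_cov (softmax (x + t *\<^sub>R d)) w d) (at t)"
proof -
  define E where "E j = exp (x $ j + t * d $ j)" for j
  define Z where "Z = (\<Sum>j\<in>UNIV. E j)"
  have Z: "Z > 0"
    unfolding Z_def E_def by (rule sum_exp_pos)
  have "((\<lambda>t. (\<Sum>j\<in>UNIV. w $ j * exp (x $ j + t * d $ j)) / (\<Sum>j\<in>UNIV. exp (x $ j + t * d $ j)))
      has_real_derivative
      ((\<Sum>j\<in>UNIV. w $ j * (E j * d $ j)) * Z - (\<Sum>j\<in>UNIV. w $ j * E j) * (\<Sum>j\<in>UNIV. E j * d $ j))
        / (Z * Z)) (at t)"
    using Z unfolding E_def Z_def by (auto intro!: derivative_eq_intros simp: mult_ac)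
  moreover have "(\<lambda>t. softmax (x + t *\<^sub>R d) \<bullet> w)
      = (\<lambda>t. (\<Sum>j\<in>UNIV. w $ j * exp (x $ j + t * d $ j)) / (\<Sum>j\<in>UNIV. exp (x $ j + t * d $ j)))"
    by (simp add: softmax_def inner_vec_def sum_divide_distrib mult.commute)
  moreover have "weighted_cov (softmax (x + t *\<^sub>R d)) w d
      = ((\<Sum>j\<in>UNIV. w $ j * (E j * d $ j)) * Z - (\<Sum>j\<in>UNIV. w $ j * E j) * (\<Sum>j\<in>UNIV. E j * d $ j))
        / (Z * Z)"
    using Z
    by (simp add: weighted_cov_def softmax_def inner_vec_def E_def Z_def field_simps
        flip: sum_divide_distrib)
  ultimately show ?thesis
    by simp
qed

lemma softmax_diff_inner_eq_weighted_cov: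
  "\<exists>s\<in>prob_simplex. (softmax y - softmax x) \<bullet> w = weighted_cov s w (y - x)"
proof -
  obtain \<tau> where "softmax (x + 1 *\<^sub>R (y - x)) \<bullet> w - softmax (x + 0 *\<^sub>R (y - x)) \<bullet> w
      = (1 - 0) * weighted_cov (softmax (x + \<tau> *\<^sub>R (y - x))) w (y - x)"
    using MVT2[of 0 1 "\<lambda>t. softmax (x + t *\<^sub>R (y - x)) \<bullet> w", OF _ softmax_inner_has_real_derivative]
    by auto
  then show ?thesis
    using softmax_in_prob_simplex by (auto simp: inner_diff_left)
qed

lemma prob_simplex_nonneg: "s \<in> prob_simplex \<Longrightarrow> 0 \<le> s $ j"
  by (simp add: prob_simplex_def)

lemma prob_simplex_le_one: "s \<in> prob_simplex \<Longrightarrow> s $ j \<le> 1"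
  using member_le_sum[of j UNIV "\<lambda>j. s $ j"] by (simp add: prob_simplex_def)

lemma abs_inner_prob_simplex_le_infnorm:
  assumes "s \<in> prob_simplex"
  shows "\<bar>s \<bullet> v\<bar> \<le> infnorm v"
proof -
  have "\<bar>s \<bullet> v\<bar> \<le> (\<Sum>j\<in>UNIV. s $ j * infnorm v)"
    unfolding inner_vec_def using assms
    by (intro sum_abs [THEN order_trans] sum_mono)
       (simp add: abs_mult prob_simplex_nonneg mult_left_mono component_le_infnorm_cart)
  also have "\<dots> = infnorm v"
    using assms by (simp add: prob_simplex_def flip: sum_distrib_right)
  finally show ?thesis .
qed

lemma weighted_cov_scaleR_right: "weighted_cov s u (a *\<^sub>R v) = a * weighted_cov s u v"
  by (simp add: weighted_cov_def sum_distrib_left algebra_simps)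

lemma weighted_cov_centered:
  "weighted_cov s u v = (\<Sum>j\<in>UNIV. s $ j * u $ j * (v $ j - s \<bullet> v))"
proof -
  have "(\<Sum>j\<in>UNIV. s $ j * u $ j * (v $ j - m))
      = (\<Sum>j\<in>UNIV. s $ j * u $ j * v $ j) - (\<Sum>j\<in>UNIV. s $ j * u $ j) * m" for m
    by (simp add: right_diff_distrib sum_subtractf sum_distrib_right)
  then show ?thesis
    by (simp add: weighted_cov_def inner_vec_def)
qed

lemma weighted_variance_le_second_moment:
  assumes "s \<in> prob_simplex"
  shows "(\<Sum>j\<in>UNIV. s $ j * (v $ j - s \<bullet> v)\<^sup>2) \<le> (\<Sum>j\<in>UNIV. s $ j * (v $ j)\<^sup>2)"
proof -
  have "(\<Sum>j\<in>UNIV. s $ j * (v $ j - s \<bullet> v)\<^sup>2)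
      = (\<Sum>j\<in>UNIV. s $ j * (v $ j)\<^sup>2) - 2 * (s \<bullet> v) * (s \<bullet> v)
        + (s \<bullet> v)\<^sup>2 * (\<Sum>j\<in>UNIV. s $ j)"
    by (simp add: power2_diff algebra_simps sum.distrib sum_subtractf inner_vec_def
        sum_distrib_left sum_distrib_right)
  then show ?thesis
    using assms by (simp add: prob_simplex_def power2_eq_square)
qed

lemma abs_weighted_cov_le_norm:
  assumes s: "s \<in> prob_simplex"
  shows "\<bar>weighted_cov s u v\<bar> \<le> norm u * norm v"
proof -
  define a where "a = (\<chi> j. sqrt (s $ j) * u $ j)"
  define b where "b = (\<chi> j. sqrt (s $ j) * (v $ j - s \<bullet> v))"
  have s_nonneg: "\<And>j. 0 \<le> s $ j" and s_le_one: "\<And>j. s $ j \<le> 1"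
    using s prob_simplex_nonneg prob_simplex_le_one by blast+
  have sqrt_weight: "(sqrt (s $ j) * x) * (sqrt (s $ j) * y) = s $ j * (x * y)" for j x y
    using real_sqrt_mult_self[of "s $ j"] s_nonneg[of j] by (simp add: mult_ac)
  have cov_eq: "weighted_cov s u v = a \<bullet> b"
    unfolding weighted_cov_centered a_def b_def inner_vec_def
    by (intro sum.cong refl) (simp add: sqrt_weight)
  have "norm a \<le> norm u"
    using s_nonneg s_le_one
    by (intro norm_le_componentwise_cart) (simp add: a_def abs_mult mult_left_le_one_le)
  have "(norm b)\<^sup>2 = b \<bullet> b"
    by (rule power2_norm_eq_inner)
  also have "\<dots> = (\<Sum>j\<in>UNIV. s $ j * (v $ j - s \<bullet> v)\<^sup>2)"
    unfolding b_def inner_vec_def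
    by (intro sum.cong refl) (simp add: sqrt_weight power2_eq_square)
  also have "\<dots> \<le> (\<Sum>j\<in>UNIV. s $ j * (v $ j)\<^sup>2)"
    using s by (rule weighted_variance_le_second_moment)
  also have "\<dots> \<le> (\<Sum>j\<in>UNIV. (v $ j)\<^sup>2)"
    using s_nonneg s_le_one by (intro sum_mono mult_left_le_one_le) auto
  also have "\<dots> = (norm v)\<^sup>2"
    by (simp add: norm_vec_def L2_set_def sum_nonneg)
  finally have "norm b \<le> norm v"
    by (rule power2_le_imp_le) simp
  have "\<bar>a \<bullet> b\<bar> \<le> norm a * norm b"
    by (rule Cauchy_Schwarz_ineq2)
  also have "\<dots> \<le> norm u * norm v"
    using \<open>norm a \<le> norm u\<close> \<open>norm b \<le> norm v\<close> by (intro mult_mono) simp_all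
  finally show ?thesis
    unfolding cov_eq .
qed

lemma abs_weighted_cov_le_infnorm:
  assumes s: "s \<in> prob_simplex"
  shows "\<bar>weighted_cov s u v\<bar> \<le> 2 * infnorm u * infnorm v"
proof -
  have "\<bar>u $ j * (v $ j - s \<bullet> v)\<bar> \<le> infnorm u * (2 * infnorm v)" for j
    unfolding abs_mult
    using component_le_infnorm_cart[of u j] component_le_infnorm_cart[of v j]
      abs_inner_prob_simplex_le_infnorm[OF s, of v]
    by (intro mult_mono) (auto simp: infnorm_pos_le)
  then have "\<bar>weighted_cov s u v\<bar> \<le> (\<Sum>j\<in>UNIV. s $ j * (infnorm u * (2 * infnorm v)))"
    unfolding weighted_cov_centered using s
    by (intro sum_abs [THEN order_trans] sum_mono)
       (simp add: abs_mult prob_simplex_nonneg mult.assoc mult_left_mono)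
  also have "\<dots> = 2 * infnorm u * infnorm v"
    using s by (simp add: prob_simplex_def flip: sum_distrib_right)
  finally show ?thesis .
qed

lemma dual_norm_le:
  assumes "N 0 \<le> 1" and "\<And>v. N v \<le> 1 \<Longrightarrow> u \<bullet> v \<le> c"
  shows "dual_norm N u \<le> c"
  unfolding dual_norm_def using assms by (intro cSup_least) auto

lemma beta_smooth_wrtI:
  assumes "convex_on UNIV g"
    and "\<And>x. (g has_derivative (\<lambda>h. G x \<bullet> h)) (at x)"
    and "N 0 \<le> 1"
    and "\<And>x y v. N v \<le> 1 \<Longrightarrow> (G x - G y) \<bullet> v \<le> \<beta> * N (x - y)"
  shows "beta_smooth_wrt N \<beta> g"
  unfolding beta_smooth_wrt_def using assms by (blast intro: dual_norm_le)

definition scaled_lse :: "real \<Rightarrow> real^'n \<Rightarrow> real^'n \<Rightarrow> real" where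
  "scaled_lse \<eta> c l = \<eta> * lse ((1 / \<eta>) *\<^sub>R (l - c))"

lemma convex_on_scaled_lse:
  fixes c :: "real^'n"
  assumes "0 \<le> \<eta>"
  shows "convex_on UNIV (scaled_lse \<eta> c)"
proof (rule convex_onI)
  fix t :: real and x y :: "real^'n"
  assume "0 < t" "t < 1"
  have "(1 - t) *\<^sub>R x + t *\<^sub>R y - c = (1 - t) *\<^sub>R (x - c) + t *\<^sub>R (y - c)"
    by (simp add: algebra_simps)
  then have "(1 / \<eta>) *\<^sub>R ((1 - t) *\<^sub>R x + t *\<^sub>R y - c)
      = (1 - t) *\<^sub>R ((1 / \<eta>) *\<^sub>R (x - c)) + t *\<^sub>R ((1 / \<eta>) *\<^sub>R (y - c))"
    by (simp add: scaleR_add_right)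
  then have "lse ((1 / \<eta>) *\<^sub>R ((1 - t) *\<^sub>R x + t *\<^sub>R y - c))
      \<le> (1 - t) * lse ((1 / \<eta>) *\<^sub>R (x - c)) + t * lse ((1 / \<eta>) *\<^sub>R (y - c))"
    using \<open>0 < t\<close> \<open>t < 1\<close> by (simp only:) (rule convex_onD[OF convex_on_lse], auto)
  then show "scaled_lse \<eta> c ((1 - t) *\<^sub>R x + t *\<^sub>R y)
      \<le> (1 - t) * scaled_lse \<eta> c x + t * scaled_lse \<eta> c y"
    using \<open>0 \<le> \<eta>\<close> unfolding scaled_lse_def by (auto dest: mult_left_mono simp: algebra_simps)
qed (rule convex_UNIV)

lemma scaled_lse_has_derivative:
  assumes "\<eta> \<noteq> 0"
  shows "(scaled_lse \<eta> c has_derivative (\<lambda>h. softmax ((1 / \<eta>) *\<^sub>R (l - c)) \<bullet> h)) (at l)"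
proof -
  have "((\<lambda>l. (1 / \<eta>) *\<^sub>R (l - c)) has_derivative (\<lambda>h. (1 / \<eta>) *\<^sub>R h)) (at l)"
    by (auto intro!: derivative_eq_intros)
  from has_derivative_compose[OF this lse_has_derivative]
  have "(scaled_lse \<eta> c has_derivative
      (\<lambda>h. \<eta> * (softmax ((1 / \<eta>) *\<^sub>R (l - c)) \<bullet> ((1 / \<eta>) *\<^sub>R h)))) (at l)"
    unfolding scaled_lse_def by (rule has_derivative_mult_right)
  then show ?thesis
    using assms by simp
qed

lemma softmax_scaled_diff_inner_eq_weighted_cov:
  "\<exists>s\<in>prob_simplex. (softmax ((1 / \<eta>) *\<^sub>R (x - c)) - softmax ((1 / \<eta>) *\<^sub>R (y - c))) \<bullet> v
     = weighted_cov s v (x - y) / \<eta>"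
proof -
  have "(1 / \<eta>) *\<^sub>R (x - c) - (1 / \<eta>) *\<^sub>R (y - c) = (1 / \<eta>) *\<^sub>R (x - y)"
    by (simp add: algebra_simps)
  then show ?thesis
    using softmax_diff_inner_eq_weighted_cov[of "(1 / \<eta>) *\<^sub>R (x - c)" "(1 / \<eta>) *\<^sub>R (y - c)" v]
    by (simp add: weighted_cov_scaleR_right)
qed

lemma softmax_scaled_diff_inner_le_norm:
  assumes "0 < \<eta>"
  shows "(softmax ((1 / \<eta>) *\<^sub>R (x - c)) - softmax ((1 / \<eta>) *\<^sub>R (y - c))) \<bullet> v
     \<le> norm v * norm (x - y) / \<eta>"
proof -
  obtain s where "s \<in> prob_simplex"
    and eq: "(softmax ((1 / \<eta>) *\<^sub>R (x - c)) - softmax ((1 / \<eta>) *\<^sub>R (y - c))) \<bullet> v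
      = weighted_cov s v (x - y) / \<eta>"
    using softmax_scaled_diff_inner_eq_weighted_cov by blast
  then have "weighted_cov s v (x - y) \<le> norm v * norm (x - y)"
    using abs_weighted_cov_le_norm abs_le_D1 by blast
  then show ?thesis
    unfolding eq using assms by (simp add: divide_right_mono)
qed

lemma softmax_scaled_diff_inner_le_infnorm:
  assumes "0 < \<eta>"
  shows "(softmax ((1 / \<eta>) *\<^sub>R (x - c)) - softmax ((1 / \<eta>) *\<^sub>R (y - c))) \<bullet> v
     \<le> 2 * infnorm v * infnorm (x - y) / \<eta>"
proof -
  obtain s where "s \<in> prob_simplex"
    and eq: "(softmax ((1 / \<eta>) *\<^sub>R (x - c)) - softmax ((1 / \<eta>) *\<^sub>R (y - c))) \<bullet> v
      = weighted_cov s v (x - y) / \<eta>"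
    using softmax_scaled_diff_inner_eq_weighted_cov by blast
  then have "weighted_cov s v (x - y) \<le> 2 * infnorm v * infnorm (x - y)"
    using abs_weighted_cov_le_infnorm abs_le_D1 by blast
  then show ?thesis
    unfolding eq using assms by (simp add: divide_right_mono)
qed

lemma smooth_scaled_lse:
  fixes c q :: "real^'n" and K \<eta> d :: real
  assumes "0 \<le> K" and "0 < \<eta>"
  defines "f \<equiv> \<lambda>l. K * (scaled_lse \<eta> c l - q \<bullet> l + d)"
  shows "beta_smooth_wrt norm (K / \<eta>) f \<and> beta_smooth_wrt infnorm (2 * K / \<eta>) f"
proof -
  define A where "A l = (1 / \<eta>) *\<^sub>R (l - c)" for l
  define G where "G l = K *\<^sub>R (softmax (A l) - q)" for l
  have "convex_on UNIV (\<lambda>l. d - q \<bullet> l)"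
    by (rule convex_onI) (simp_all add: inner_add_right algebra_simps)
  then have "convex_on UNIV (\<lambda>l. K * (scaled_lse \<eta> c l + (d - q \<bullet> l)))"
    using \<open>0 \<le> K\<close> \<open>0 < \<eta>\<close> by (intro convex_on_cmul convex_on_add convex_on_scaled_lse) auto
  then have convex: "convex_on UNIV f"
    by (simp add: f_def algebra_simps)
  have deriv: "(f has_derivative (\<lambda>h. G l \<bullet> h)) (at l)" for l
    unfolding f_def G_def A_def using \<open>0 < \<eta>\<close>
    by (auto intro!: derivative_eq_intros scaled_lse_has_derivative simp: inner_diff_left)
  have grad_diff: "(G x - G y) \<bullet> v = K * ((softmax (A x) - softmax (A y)) \<bullet> v)" for x y v
    by (simp add: G_def algebra_simps)
  have l2: "(G x - G y) \<bullet> v \<le> K / \<eta> * norm (x - y)" if "norm v \<le> 1" for x y v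
  proof -
    have "(softmax (A x) - softmax (A y)) \<bullet> v \<le> norm v * norm (x - y) / \<eta>"
      unfolding A_def using \<open>0 < \<eta>\<close> by (rule softmax_scaled_diff_inner_le_norm)
    also have "\<dots> \<le> norm (x - y) / \<eta>"
      using that \<open>0 < \<eta>\<close> by (intro divide_right_mono mult_left_le_one_le) auto
    finally have "K * ((softmax (A x) - softmax (A y)) \<bullet> v) \<le> K * (norm (x - y) / \<eta>)"
      using \<open>0 \<le> K\<close> by (rule mult_left_mono)
    then show ?thesis
      unfolding grad_diff by simp
  qed
  have linf: "(G x - G y) \<bullet> v \<le> 2 * K / \<eta> * infnorm (x - y)" if "infnorm v \<le> 1" for x y v
  proof -
    have "(softmax (A x) - softmax (A y)) \<bullet> v \<le> 2 * infnorm v * infnorm (x - y) / \<eta>"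
      unfolding A_def using \<open>0 < \<eta>\<close> by (rule softmax_scaled_diff_inner_le_infnorm)
    also have "\<dots> \<le> 2 * infnorm (x - y) / \<eta>"
      using that \<open>0 < \<eta>\<close> by (intro divide_right_mono) (auto simp: infnorm_pos_le mult_left_le_one_le)
    finally have "K * ((softmax (A x) - softmax (A y)) \<bullet> v) \<le> K * (2 * infnorm (x - y) / \<eta>)"
      using \<open>0 \<le> K\<close> by (rule mult_left_mono)
    then show ?thesis
      unfolding grad_diff by (simp add: mult_ac)
  qed
  show ?thesis
    using convex deriv l2 linf by (auto intro!: beta_smooth_wrtI simp: infnorm_0)
qed

lemma beta_smooth_wrt_mono:
  assumes "beta_smooth_wrt N \<beta> g" and "\<beta> \<le> \<beta>'" and "\<And>x. 0 \<le> N x"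
  shows "beta_smooth_wrt N \<beta>' g"
  using assms unfolding beta_smooth_wrt_def by (meson mult_right_mono order_trans)

lemma phi_eq_scaled_lse:
  fixes C :: "real^'n^'n" and q p :: "real^'n"
  assumes "\<eta> \<noteq> 0"
  shows "phi \<eta> C q p i = (\<lambda>l. real CARD('n) * p $ i *
    (scaled_lse \<eta> (\<chi> j. C $ i $ j + \<eta>) l - q \<bullet> l + (\<eta> - \<eta> * ln (p $ i))))"
  using assms
  by (simp add: fun_eq_iff phi_def scaled_lse_def lse_def diff_divide_distrib add_divide_distrib
      algebra_simps)

theorem lemma1:
  fixes \<eta> :: real and C :: "real^'n^'n" and q p :: "real^'n" and i :: 'n
  assumes "\<eta> > 0"
    and "\<forall>a b. C $ a $ b \<ge> 0"
    and "q \<in> prob_simplex" and "p \<in> prob_simplex"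
    and "\<forall>j. q $ j > 0" and "\<forall>j. p $ j > 0"
  shows "beta_smooth_wrt norm (real CARD('n) * p $ i / \<eta>) (phi \<eta> C q p i)
       \<and> beta_smooth_wrt infnorm (5 * real CARD('n) * p $ i / \<eta>) (phi \<eta> C q p i)"
proof -
  define K where "K = real CARD('n) * p $ i"
  have "0 \<le> K"
    using \<open>\<forall>j. p $ j > 0\<close> by (simp add: K_def less_imp_le)
  have smooth: "beta_smooth_wrt norm (K / \<eta>) (phi \<eta> C q p i)
      \<and> beta_smooth_wrt infnorm (2 * K / \<eta>) (phi \<eta> C q p i)"
    unfolding phi_eq_scaled_lse[of \<eta>, OF less_imp_neq[OF \<open>\<eta> > 0\<close>, symmetric]] K_def[symmetric]
    using \<open>0 \<le> K\<close> \<open>\<eta> > 0\<close> by (rule smooth_scaled_lse)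
  have "2 * K / \<eta> \<le> 5 * K / \<eta>"
    using \<open>0 \<le> K\<close> \<open>\<eta> > 0\<close> by (intro divide_right_mono) auto
  then have "beta_smooth_wrt infnorm (5 * K / \<eta>) (phi \<eta> C q p i)"
    using smooth beta_smooth_wrt_mono infnorm_pos_le by blast
  with smooth show ?thesis
    by (simp add: K_def mult.assoc)
qed

end
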